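(* For every annotated CQ $(q,E)$ in which $E=(\emptyset,E^-)$ consists of negative examples only, every $\preceq^{\mathrm{cod}}$-repair for $(q,E)$ is a $\preceq^{\mathrm{cod}}$-specialization for $(q,E)$.
   Context: Data examples are pairs $(I,\mathbf a)$ with $I$ a finite instance and $\mathbf a$ a $k$-tuple of its values. A $k$-ary CQ is $q(x_1,\dots,x_k)\text{ :- }\alpha_1,\dots,\alpha_n$ (relational atoms, no constants, each answer variable in some atom). $[\![q]\!]$ is the set of data examples $(I,\mathbf a)$ with $\mathbf a\in q(I)$; $\subseteq$ is query containment. $q$ fits $E=(E^+,E^-)$ iff $E^+\subseteq[\![q]\!]$ and $E^-\cap[\![q]\!]=\emptyset$. $q_1\preceq^{\mathrm{cod}}_q q_2$ iff $[\![q]\!]\oplus[\![q_1]\!]\subseteq[\![q]\!]\oplus[\![q_2]\!]$ ($\oplus$ symmetric difference), $\prec_q$ its strict part. A $\preceq^{\mathrm{cod}}$-repair for $(q,E)$ is a CQ $q'$ fitting $E$ such that no CQ $q''$ fitting $E$ has $q''\prec^{\mathrm{cod}}_q q'$. A $\preceq^{\mathrm{cod}}$-specialization for $(q,E)$ is a CQ $q'$ fitting $E$ with $q'\subseteq q$ such that no CQ $q''$ fitting $E$ with $q''\subseteq q$ has $q''\prec^{\mathrm{cod}}_q q'$. Candidate CQs use only relation symbols occurring in $q$ and $E$. *)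

theory Defs
  imports Main
begin

(* Schema: relation symbols of type 'r with arity function ar.
   Instance values and query variables are natural numbers (countably infinite supply). *)

type_synonym 'r fact = "'r \<times> nat list"
type_synonym 'r inst = "'r fact set"
type_synonym 'r dex = "'r inst \<times> nat list"
(* CQ: answer variables x1..xk and list of relational atoms *)
type_synonym 'r cq = "nat list \<times> ('r \<times> nat list) list"

definition adom :: "'r inst \<Rightarrow> nat set" where
  "adom I = (\<Union>(R, vs)\<in>I. set vs)"

definition wf_inst :: "('r \<Rightarrow> nat) \<Rightarrow> 'r inst \<Rightarrow> bool" where
  "wf_inst ar I \<longleftrightarrow> finite I \<and> (\<forall>(R, vs)\<in>I. length vs = ar R)"

definition data_example :: "('r \<Rightarrow> nat) \<Rightarrow> nat \<Rightarrow> 'r dex \<Rightarrow> bool" where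
  "data_example ar k e \<longleftrightarrow>
     wf_inst ar (fst e) \<and> length (snd e) = k \<and> set (snd e) \<subseteq> adom (fst e)"

definition cq_vars :: "'r cq \<Rightarrow> nat set" where
  "cq_vars q = (\<Union>(R, ys)\<in>set (snd q). set ys)"

definition cq_rels :: "'r cq \<Rightarrow> 'r set" where
  "cq_rels q = fst ` set (snd q)"

definition wf_cq :: "('r \<Rightarrow> nat) \<Rightarrow> nat \<Rightarrow> 'r cq \<Rightarrow> bool" where
  "wf_cq ar k q \<longleftrightarrow> length (fst q) = k \<and>
     (\<forall>(R, ys)\<in>set (snd q). length ys = ar R) \<and>
     set (fst q) \<subseteq> cq_vars q"

definition answer :: "'r cq \<Rightarrow> 'r inst \<Rightarrow> nat list \<Rightarrow> bool" where
  "answer q I a \<longleftrightarrow> (\<exists>h :: nat \<Rightarrow> nat. map h (fst q) = a \<and>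
     (\<forall>(R, ys)\<in>set (snd q). (R, map h ys) \<in> I))"

definition sem :: "('r \<Rightarrow> nat) \<Rightarrow> nat \<Rightarrow> 'r cq \<Rightarrow> 'r dex set" where
  "sem ar k q = {e. data_example ar k e \<and> answer q (fst e) (snd e)}"

definition cq_contained :: "('r \<Rightarrow> nat) \<Rightarrow> nat \<Rightarrow> 'r cq \<Rightarrow> 'r cq \<Rightarrow> bool" where
  "cq_contained ar k q1 q2 \<longleftrightarrow> sem ar k q1 \<subseteq> sem ar k q2"

definition fits :: "('r \<Rightarrow> nat) \<Rightarrow> nat \<Rightarrow> 'r cq \<Rightarrow> 'r dex set \<times> 'r dex set \<Rightarrow> bool" where
  "fits ar k q E \<longleftrightarrow> fst E \<subseteq> sem ar k q \<and> snd E \<inter> sem ar k q = {}"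

definition symdiff :: "'a set \<Rightarrow> 'a set \<Rightarrow> 'a set" where
  "symdiff A B = (A - B) \<union> (B - A)"

definition cod_le :: "('r \<Rightarrow> nat) \<Rightarrow> nat \<Rightarrow> 'r cq \<Rightarrow> 'r cq \<Rightarrow> 'r cq \<Rightarrow> bool" where
  "cod_le ar k q q1 q2 \<longleftrightarrow> symdiff (sem ar k q) (sem ar k q1) \<subseteq> symdiff (sem ar k q) (sem ar k q2)"

definition cod_less :: "('r \<Rightarrow> nat) \<Rightarrow> nat \<Rightarrow> 'r cq \<Rightarrow> 'r cq \<Rightarrow> 'r cq \<Rightarrow> bool" where
  "cod_less ar k q q1 q2 \<longleftrightarrow> cod_le ar k q q1 q2 \<and> \<not> cod_le ar k q q2 q1"

definition sig :: "'r cq \<Rightarrow> 'r dex set \<times> 'r dex set \<Rightarrow> 'r set" where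
  "sig q E = cq_rels q \<union> (\<Union>e\<in>fst E \<union> snd E. fst ` fst e)"

definition candidate :: "('r \<Rightarrow> nat) \<Rightarrow> nat \<Rightarrow> 'r cq \<Rightarrow> 'r dex set \<times> 'r dex set \<Rightarrow> 'r cq \<Rightarrow> bool" where
  "candidate ar k q E q' \<longleftrightarrow> wf_cq ar k q' \<and> cq_rels q' \<subseteq> sig q E"

definition cod_repair :: "('r \<Rightarrow> nat) \<Rightarrow> nat \<Rightarrow> 'r cq \<Rightarrow> 'r dex set \<times> 'r dex set \<Rightarrow> 'r cq \<Rightarrow> bool" where
  "cod_repair ar k q E q' \<longleftrightarrow> candidate ar k q E q' \<and> fits ar k q' E \<and>
     \<not> (\<exists>q''. candidate ar k q E q'' \<and> fits ar k q'' E \<and> cod_less ar k q q'' q')"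

definition cod_specialization :: "('r \<Rightarrow> nat) \<Rightarrow> nat \<Rightarrow> 'r cq \<Rightarrow> 'r dex set \<times> 'r dex set \<Rightarrow> 'r cq \<Rightarrow> bool" where
  "cod_specialization ar k q E q' \<longleftrightarrow> candidate ar k q E q' \<and> fits ar k q' E \<and> cq_contained ar k q' q \<and>
     \<not> (\<exists>q''. candidate ar k q E q'' \<and> fits ar k q'' E \<and> cq_contained ar k q'' q \<and> cod_less ar k q q'' q')"

definition annotated_cq :: "('r \<Rightarrow> nat) \<Rightarrow> nat \<Rightarrow> 'r cq \<Rightarrow> 'r dex set \<times> 'r dex set \<Rightarrow> bool" where
  "annotated_cq ar k q E \<longleftrightarrow> wf_cq ar k q \<and> finite (fst E) \<and> finite (snd E) \<and>
     (\<forall>e\<in>fst E \<union> snd E. data_example ar k e)"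

end

theory Submission
  imports Defs
begin

text \<open>
  If a repair \<open>q'\<close> were not contained in \<open>q\<close>, the conjunction of \<open>q\<close> and \<open>q'\<close>
  (the two queries with their answer variables identified) would still fit \<open>E\<close>: it has no
  more answers than \<open>q'\<close>, and \<open>E\<close> only contains negative examples. Its semantics is
  \<open>[[q]] \<inter> [[q']]\<close>, so its symmetric difference with \<open>[[q]]\<close> is \<open>[[q]] - [[q']]\<close>, which
  is strictly smaller than \<open>[[q]] \<oplus> [[q']]\<close>. This contradicts minimality of the repair.
\<close>

definition atoms_hom :: "(nat \<Rightarrow> nat) \<Rightarrow> ('r \<times> nat list) list \<Rightarrow> 'r inst \<Rightarrow> bool" where
  "atoms_hom h A I \<longleftrightarrow> (\<forall>(R, vs)\<in>set A. (R, map h vs) \<in> I)"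

definition rename_atoms :: "(nat \<Rightarrow> nat) \<Rightarrow> ('r \<times> nat list) list \<Rightarrow> ('r \<times> nat list) list" where
  "rename_atoms f A = map (\<lambda>(R, vs). (R, map f vs)) A"

lemma answer_iff_atoms_hom: "answer q I a \<longleftrightarrow> (\<exists>h. map h (fst q) = a \<and> atoms_hom h (snd q) I)"
  unfolding answer_def atoms_hom_def by simp

lemma atoms_hom_append [simp]: "atoms_hom h (A @ B) I \<longleftrightarrow> atoms_hom h A I \<and> atoms_hom h B I"
  unfolding atoms_hom_def by auto

lemma atoms_hom_rename_atoms [simp]: "atoms_hom h (rename_atoms f A) I \<longleftrightarrow> atoms_hom (h \<circ> f) A I"
  unfolding atoms_hom_def rename_atoms_def by auto

lemma atoms_hom_cong:
  assumes "\<And>R vs v. (R, vs) \<in> set A \<Longrightarrow> v \<in> set vs \<Longrightarrow> h v = h' v"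
  shows "atoms_hom h A I \<longleftrightarrow> atoms_hom h' A I"
proof -
  have "map h vs = map h' vs" if "(R, vs) \<in> set A" for R vs
    using assms that by simp
  then show ?thesis unfolding atoms_hom_def by (metis (no_types, lifting) case_prodD case_prodI2)
qed

lemma cq_vars_rename_atoms: "cq_vars (xs, rename_atoms f A) = f ` cq_vars (xs, A)"
  unfolding cq_vars_def rename_atoms_def by force

lemma cq_rels_rename_atoms: "fst ` set (rename_atoms f A) = fst ` set A"
  unfolding rename_atoms_def by force

text \<open>
  \<open>class_rep P\<close> sends every variable to the least element of its class in the equivalence
  relation generated by \<open>P\<close>; renaming by it is the most general unifier of the pairs in \<open>P\<close>.
\<close>

definition class_rep :: "(nat \<times> nat) set \<Rightarrow> nat \<Rightarrow> nat" where
  "class_rep P v = (LEAST w. (v, w) \<in> (P \<union> P\<inverse>)\<^sup>*)"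

lemma class_rep_related: "(v, class_rep P v) \<in> (P \<union> P\<inverse>)\<^sup>*"
  unfolding class_rep_def by (rule LeastI[of _ v]) simp

lemma class_rep_eq:
  assumes "(v, w) \<in> P"
  shows "class_rep P v = class_rep P w"
proof -
  have "(v, w) \<in> (P \<union> P\<inverse>)\<^sup>*" "(w, v) \<in> (P \<union> P\<inverse>)\<^sup>*"
    using assms by auto
  then have "(v, u) \<in> (P \<union> P\<inverse>)\<^sup>* \<longleftrightarrow> (w, u) \<in> (P \<union> P\<inverse>)\<^sup>*" for u
    by (meson rtrancl_trans)
  then show ?thesis unfolding class_rep_def by simp
qed

lemma class_rep_invariant:
  assumes "\<And>v w. (v, w) \<in> P \<Longrightarrow> H v = H w"
  shows "H (class_rep P v) = H v"
  using class_rep_related[of v P]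
proof (induction rule: rtrancl_induct)
  case (step u u')
  then show ?case using assms by auto
qed simp

definition var_bound :: "'r cq \<Rightarrow> nat" where
  "var_bound q = Suc (sum_list (fst q @ concat (map snd (snd q))))"

lemma var_bound_gt:
  assumes "v \<in> set (fst q) \<union> cq_vars q"
  shows "v < var_bound q"
proof -
  have "v \<in> set (fst q @ concat (map snd (snd q)))"
    using assms unfolding cq_vars_def by force
  then show ?thesis
    unfolding var_bound_def using member_le_sum_list by fastforce
qed

text \<open>
  The variables of \<open>q'\<close> are shifted by \<open>var_bound q\<close> to make them disjoint from those of
  \<open>q\<close>, and then the \<open>i\<close>-th answer variables of the two queries are unified.
\<close>

definition answer_unifier :: "'r cq \<Rightarrow> 'r cq \<Rightarrow> nat \<Rightarrow> nat" where
  "answer_unifier q q' = class_rep (set (zip (fst q) (map ((+) (var_bound q)) (fst q'))))"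

definition cq_conj :: "'r cq \<Rightarrow> 'r cq \<Rightarrow> 'r cq" where
  "cq_conj q q' =
     (map (answer_unifier q q') (fst q),
      rename_atoms (answer_unifier q q') (snd q) @
      rename_atoms (answer_unifier q q' \<circ> (+) (var_bound q)) (snd q'))"

lemma answer_unifier_nth:
  assumes "i < length (fst q)" "i < length (fst q')"
  shows "answer_unifier q q' (fst q ! i) = answer_unifier q q' (var_bound q + fst q' ! i)"
  unfolding answer_unifier_def
  by (rule class_rep_eq) (use assms in \<open>auto simp: in_set_zip intro!: exI[of _ i]\<close>)

lemma answer_cq_conjD:
  assumes "length (fst q) = length (fst q')" "answer (cq_conj q q') I a"
  shows "answer q I a \<and> answer q' I a"
proof -
  let ?\<theta> = "answer_unifier q q'" and ?N = "var_bound q"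
  obtain h where ans: "map (h \<circ> ?\<theta>) (fst q) = a"
    and hom: "atoms_hom (h \<circ> ?\<theta>) (snd q) I" "atoms_hom (h \<circ> ?\<theta> \<circ> (+) ?N) (snd q') I"
    using assms(2) unfolding answer_iff_atoms_hom cq_conj_def by (auto simp: comp_assoc)
  have "map (h \<circ> ?\<theta> \<circ> (+) ?N) (fst q') = a"
    using ans assms(1) answer_unifier_nth[of _ q q'] by (auto intro!: nth_equalityI)
  then show ?thesis
    using ans hom unfolding answer_iff_atoms_hom by blast
qed

lemma answer_cq_conjI:
  assumes "answer q I a" "answer q' I a"
  shows "answer (cq_conj q q') I a"
proof -
  let ?\<theta> = "answer_unifier q q'" and ?N = "var_bound q"
  obtain h1 h2 where ans: "map h1 (fst q) = a" "map h2 (fst q') = a"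
    and hom: "atoms_hom h1 (snd q) I" "atoms_hom h2 (snd q') I"
    using assms unfolding answer_iff_atoms_hom by blast
  define H where "H v = (if v < ?N then h1 v else h2 (v - ?N))" for v
  have H_low: "H v = h1 v" if "v \<in> set (fst q) \<union> cq_vars q" for v
    using var_bound_gt[OF that] unfolding H_def by simp
  have H_shift: "H \<circ> (+) ?N = h2"
    unfolding H_def by auto
  have H_resp: "H v = H w" if "(v, w) \<in> set (zip (fst q) (map ((+) ?N) (fst q')))" for v w
  proof -
    from that obtain i where i: "i < length (fst q)" "i < length (fst q')"
      and vw: "v = fst q ! i" "w = ?N + fst q' ! i"
      by (auto simp: in_set_zip)
    have "H v = h1 (fst q ! i)" using H_low i vw by simp
    also have "\<dots> = h2 (fst q' ! i)" using ans i by (metis nth_map)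
    finally show ?thesis using H_shift vw by (metis comp_apply)
  qed
  have "H (?\<theta> v) = H v" for v
    unfolding answer_unifier_def by (rule class_rep_invariant) (rule H_resp)
  then have H_\<theta>: "H \<circ> ?\<theta> = H" by auto
  have "map H (fst q) = a"
    using ans(1) H_low by auto
  moreover have "atoms_hom H (snd q) I"
    using hom(1) H_low by (subst atoms_hom_cong) (auto simp: cq_vars_def)
  ultimately show ?thesis
    using hom(2) H_shift H_\<theta> unfolding answer_iff_atoms_hom cq_conj_def
    by (intro exI[of _ H]) (simp flip: comp_assoc)
qed

lemma wf_cq_conj:
  assumes "wf_cq ar k q" "wf_cq ar k q'"
  shows "wf_cq ar k (cq_conj q q')"
proof -
  let ?\<theta> = "answer_unifier q q'"
  have "set (map ?\<theta> (fst q)) \<subseteq> ?\<theta> ` cq_vars q"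
    using assms(1) unfolding wf_cq_def by auto
  also have "\<dots> \<subseteq> cq_vars (cq_conj q q')"
    using cq_vars_rename_atoms[where f = ?\<theta> and xs = "fst q" and A = "snd q"]
    unfolding cq_conj_def cq_vars_def by auto
  finally show ?thesis
    using assms unfolding wf_cq_def cq_conj_def rename_atoms_def by auto
qed

lemma cq_rels_cq_conj: "cq_rels (cq_conj q q') = cq_rels q \<union> cq_rels q'"
  unfolding cq_rels_def cq_conj_def by (simp add: image_Un cq_rels_rename_atoms)

lemma sem_cq_conj:
  assumes "wf_cq ar k q" "wf_cq ar k q'"
  shows "sem ar k (cq_conj q q') = sem ar k q \<inter> sem ar k q'"
proof -
  have "length (fst q) = length (fst q')"
    using assms unfolding wf_cq_def by simp
  then show ?thesis
    unfolding sem_def using answer_cq_conjD answer_cq_conjI by blast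
qed

lemma fits_negative_anti_mono:
  assumes "fits ar k q' ({}, Eneg)" "sem ar k q'' \<subseteq> sem ar k q'"
  shows "fits ar k q'' ({}, Eneg)"
  using assms unfolding fits_def by auto

lemma cod_less_inter:
  assumes "sem ar k q'' = sem ar k q \<inter> sem ar k q'" "\<not> cq_contained ar k q' q"
  shows "cod_less ar k q q'' q'"
  using assms unfolding cod_less_def cod_le_def symdiff_def cq_contained_def by auto

lemma cod_repair_negative_contained:
  assumes "wf_cq ar k q" "cod_repair ar k q ({}, Eneg) q'"
  shows "cq_contained ar k q' q"
proof (rule ccontr)
  assume not_contained: "\<not> cq_contained ar k q' q"
  have cand: "candidate ar k q ({}, Eneg) q'" and fit: "fits ar k q' ({}, Eneg)"
    using assms(2) unfolding cod_repair_def by auto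
  then have wf': "wf_cq ar k q'" unfolding candidate_def by simp
  let ?q'' = "cq_conj q q'"
  have "candidate ar k q ({}, Eneg) ?q''"
    using cand wf_cq_conj[OF assms(1) wf'] cq_rels_cq_conj[of q q']
    unfolding candidate_def sig_def by auto
  moreover have "fits ar k ?q'' ({}, Eneg)"
    using fit sem_cq_conj[OF assms(1) wf'] by (auto intro: fits_negative_anti_mono)
  moreover have "cod_less ar k q ?q'' q'"
    using cod_less_inter[OF sem_cq_conj[OF assms(1) wf'] not_contained] .
  ultimately show False
    using assms(2) unfolding cod_repair_def by blast
qed

theorem proposition21:
  fixes ar :: "'r \<Rightarrow> nat" and k :: nat and q q' :: "'r cq" and Eneg :: "'r dex set"
  assumes "annotated_cq ar k q ({}, Eneg)"
    and "cod_repair ar k q ({}, Eneg) q'"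
  shows "cod_specialization ar k q ({}, Eneg) q'"
proof -
  have "cq_contained ar k q' q"
    using assms cod_repair_negative_contained unfolding annotated_cq_def by blast
  then show ?thesis
    using assms(2) unfolding cod_repair_def cod_specialization_def by blast
qed

end
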